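(* Let $\mathcal{H}$ be an infinite-dimensional separable Hilbert space with orthonormal bases $\{e_n\}$, $\{f_n\}$, $\mathcal{D}_e=\mathrm{span}\{e_n\}$, $\mathcal{D}_f=\mathrm{span}\{f_n\}$, $\mathcal{D}_e^2=\mathrm{span}\{|e_k\rangle\langle e_\ell|\}$. Let $\mathcal{Q}$ be a completely positive map from $\mathcal{D}_e^2$ into sesquilinear forms on $\mathcal{D}_f$ represented as $\mathcal{Q}(\rho)=\sum_\alpha K_\alpha\rho K_\alpha^\dagger$ by a countable family of generalized operators $K_\alpha$. If $\mathcal{Q}$ maps $\mathcal{D}_e^2$ into $\mathcal{B}(\mathcal{H})$ (i.e. each form $\mathcal{Q}(\rho)$ is given on $\mathcal{D}_f$ by a bounded operator), then each $K_\alpha$ maps $\mathcal{D}_e$ into $\mathcal{H}$.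
   Context: A generalized operator $K$ is a linear map from $\mathcal{D}_e$ into the conjugate algebraic dual of $\mathcal{D}_f$; write $\langle f|K|e\rangle$ for the value of $Ke$ at $f\in\mathcal{D}_f$, and $\langle e|K^\dagger|f\rangle=\langle f|K|e\rangle^*$. The representation $\mathcal{Q}(\rho)=\sum_\alpha K_\alpha\rho K_\alpha^\dagger$ means $\langle g|\mathcal{Q}(|\phi\rangle\langle\phi'|)|f\rangle=\sum_\alpha\langle g|K_\alpha|\phi\rangle\langle f|K_\alpha|\phi'\rangle^*$ for $\phi,\phi'\in\mathcal{D}_e$, $f,g\in\mathcal{D}_f$. Complete positivity: $\sum_{k,\ell}\langle\psi_k|\mathcal{Q}(|\phi_k\rangle\langle\phi_\ell|)|\psi_\ell\rangle\ge0$ for all finite families $\phi_k\in\mathcal{D}_e$, $\psi_k\in\mathcal{D}_f$. "$K$ maps $\mathcal{D}_e$ into $\mathcal{H}$" means each functional $Ke$ is of the form $f\mapsto\langle f|v\rangle$ with $v\in\mathcal{H}$. *)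

theory Defs
  imports "HOL-Analysis.Analysis"
begin

text \<open>The separable infinite-dimensional Hilbert space is modelled concretely as
  l2(N): square-summable complex sequences (every such space is unitarily isomorphic to it).
  The inner product is conjugate-linear in the first argument (physics convention).\<close>

definition l2 :: "(nat \<Rightarrow> complex) set" where
  "l2 = {x. summable (\<lambda>n. (cmod (x n))\<^sup>2)}"

definition cinner :: "(nat \<Rightarrow> complex) \<Rightarrow> (nat \<Rightarrow> complex) \<Rightarrow> complex" where
  "cinner x y = (\<Sum>n. cnj (x n) * y n)"

definition l2norm :: "(nat \<Rightarrow> complex) \<Rightarrow> real" where
  "l2norm x = sqrt (\<Sum>n. (cmod (x n))\<^sup>2)"

definition onb :: "(nat \<Rightarrow> (nat \<Rightarrow> complex)) \<Rightarrow> bool" where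
  "onb e \<longleftrightarrow> (\<forall>n. e n \<in> l2)
     \<and> (\<forall>m n. cinner (e m) (e n) = (if m = n then 1 else 0))
     \<and> (\<forall>x\<in>l2. (\<forall>n. cinner (e n) x = 0) \<longrightarrow> x = (\<lambda>_. 0))"

definition fspan :: "(nat \<Rightarrow> (nat \<Rightarrow> complex)) \<Rightarrow> (nat \<Rightarrow> complex) set" where
  "fspan e = {x. \<exists>F c. finite F \<and> x = (\<lambda>i. \<Sum>k\<in>F. c k * e k i)}"

text \<open>Elements of D_e^2 = span of |e_k><e_l| are identified with their (unique) finitely
  supported coefficient matrices r: rho = sum r k l |e_k><e_l|.\<close>
definition finmat :: "(nat \<Rightarrow> nat \<Rightarrow> complex) set" where
  "finmat = {r. finite {(k, l). r k l \<noteq> 0}}"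

text \<open>Coefficient matrix of |phi><phi'| w.r.t. the basis e.\<close>
definition rank1 :: "(nat \<Rightarrow> (nat \<Rightarrow> complex)) \<Rightarrow> (nat \<Rightarrow> complex) \<Rightarrow> (nat \<Rightarrow> complex)
    \<Rightarrow> nat \<Rightarrow> nat \<Rightarrow> complex" where
  "rank1 e \<phi> \<phi>' k l = cinner (e k) \<phi> * cnj (cinner (e l) \<phi>')"

text \<open>Generalized operator from D_e into the conjugate algebraic dual of D_f, written
  K f phi = <f|K|phi>: linear in phi on D_e, conjugate-linear in f on D_f.\<close>
definition gen_op :: "(nat \<Rightarrow> (nat \<Rightarrow> complex)) \<Rightarrow> (nat \<Rightarrow> (nat \<Rightarrow> complex))
    \<Rightarrow> ((nat \<Rightarrow> complex) \<Rightarrow> (nat \<Rightarrow> complex) \<Rightarrow> complex) \<Rightarrow> bool" where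
  "gen_op e f K \<longleftrightarrow>
     (\<forall>g\<in>fspan f. \<forall>\<phi>\<in>fspan e. \<forall>\<psi>\<in>fspan e. \<forall>a b.
        K g (\<lambda>i. a * \<phi> i + b * \<psi> i) = a * K g \<phi> + b * K g \<psi>)
   \<and> (\<forall>\<phi>\<in>fspan e. \<forall>g\<in>fspan f. \<forall>h\<in>fspan f. \<forall>a b.
        K (\<lambda>i. a * g i + b * h i) \<phi> = cnj a * K g \<phi> + cnj b * K h \<phi>)"

definition bounded_op :: "((nat \<Rightarrow> complex) \<Rightarrow> (nat \<Rightarrow> complex)) \<Rightarrow> bool" where
  "bounded_op B \<longleftrightarrow> (\<forall>x\<in>l2. B x \<in> l2)
     \<and> (\<forall>x\<in>l2. \<forall>y\<in>l2. \<forall>a b. B (\<lambda>i. a * x i + b * y i) = (\<lambda>i. a * B x i + b * B y i))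
     \<and> (\<exists>C. \<forall>x\<in>l2. l2norm (B x) \<le> C * l2norm x)"

end

theory Submission
  imports Defs
begin

text \<open>Fix \<open>\<alpha>\<close>, \<open>\<phi> \<in> D\<^sub>e\<close> and put \<open>c\<^sub>n = \<langle>f\<^sub>n|K\<^sub>\<alpha>|\<phi>\<rangle>\<close>. Keeping only the term \<open>\<beta> = \<alpha>\<close> of
  the representation and using that \<open>Q(|\<phi>\<rangle>\<langle>\<phi>|)\<close> is bounded gives
  \<open>|\<langle>g|K\<^sub>\<alpha>|\<phi>\<rangle>|\<^sup>2 \<le> \<langle>g|Q(|\<phi>\<rangle>\<langle>\<phi>|)|g\<rangle> \<le> C \<parallel>g\<parallel>\<^sup>2\<close> for \<open>g \<in> D\<^sub>f\<close>.
  For \<open>g = \<Sum>\<^sub>n\<^sub><\<^sub>N c\<^sub>n f\<^sub>n\<close> both \<open>\<langle>g|K\<^sub>\<alpha>|\<phi>\<rangle>\<close> and \<open>\<parallel>g\<parallel>\<^sup>2\<close> equal \<open>s\<^sub>N = \<Sum>\<^sub>n\<^sub><\<^sub>N |c\<^sub>n|\<^sup>2\<close>,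
  so \<open>s\<^sub>N\<^sup>2 \<le> C s\<^sub>N\<close> and \<open>c\<close> is square summable. By Riesz-Fischer \<open>v = \<Sum>\<^sub>n c\<^sub>n f\<^sub>n\<close> lies in
  \<open>l2\<close>, and conjugate linearity gives \<open>\<langle>g|K\<^sub>\<alpha>|\<phi>\<rangle> = \<langle>g|v\<rangle>\<close> on \<open>D\<^sub>f\<close>.\<close>

lemma l2_of_bounded_partial_sums:
  assumes "\<And>I. (\<Sum>i<I. (cmod (x i))\<^sup>2) \<le> C"
  shows "x \<in> l2" and "(\<Sum>n. (cmod (x n))\<^sup>2) \<le> C"
proof -
  have s: "summable (\<lambda>n. (cmod (x n))\<^sup>2)"
    by (rule bounded_imp_summable[where B=C]) (simp, metis assms lessThan_Suc_atMost)
  then show "x \<in> l2" unfolding l2_def by simp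
  show "(\<Sum>n. (cmod (x n))\<^sup>2) \<le> C" by (rule suminf_le_const[OF s assms])
qed

lemma l2_sum_le_suminf:
  "x \<in> l2 \<Longrightarrow> finite F \<Longrightarrow> (\<Sum>i\<in>F. (cmod (x i))\<^sup>2) \<le> (\<Sum>n. (cmod (x n))\<^sup>2)"
  unfolding l2_def by (auto intro: sum_le_suminf)

lemma l2_suminf_nonneg: "x \<in> l2 \<Longrightarrow> 0 \<le> (\<Sum>n. (cmod (x n))\<^sup>2)"
  unfolding l2_def by (auto intro: suminf_nonneg)

lemma l2norm_nonneg: "x \<in> l2 \<Longrightarrow> 0 \<le> l2norm x"
  unfolding l2norm_def by (simp add: l2_suminf_nonneg)

lemma l2norm_square: "x \<in> l2 \<Longrightarrow> (l2norm x)\<^sup>2 = (\<Sum>n. (cmod (x n))\<^sup>2)"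
  unfolding l2norm_def by (simp add: l2_suminf_nonneg)

lemma cmod_le_l2norm:
  assumes "x \<in> l2" shows "cmod (x i) \<le> l2norm x"
proof -
  have "(cmod (x i))\<^sup>2 \<le> (\<Sum>n. (cmod (x n))\<^sup>2)"
    using l2_sum_le_suminf[OF assms, of "{i}"] by simp
  then have "sqrt ((cmod (x i))\<^sup>2) \<le> l2norm x"
    unfolding l2norm_def by (rule real_sqrt_le_mono)
  then show ?thesis by simp
qed

lemma l2_zero: "(\<lambda>i. 0) \<in> l2"
  unfolding l2_def by simp

lemma l2_lincomb:
  assumes x: "x \<in> l2" and y: "y \<in> l2"
  shows "(\<lambda>i. a * x i + b * y i) \<in> l2"
proof -
  let ?bound = "\<lambda>i. 2 * (cmod a)\<^sup>2 * (cmod (x i))\<^sup>2 + 2 * (cmod b)\<^sup>2 * (cmod (y i))\<^sup>2"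
  have summable: "summable ?bound"
    by (intro summable_add summable_mult) (use x y in \<open>auto simp: l2_def\<close>)
  have "norm ((cmod (a * x i + b * y i))\<^sup>2) \<le> ?bound i" for i
  proof -
    have "cmod (a * x i + b * y i) \<le> cmod a * cmod (x i) + cmod b * cmod (y i)"
      by (metis norm_mult norm_triangle_ineq)
    then have "(cmod (a * x i + b * y i))\<^sup>2 \<le> (cmod a * cmod (x i) + cmod b * cmod (y i))\<^sup>2"
      by (intro power_mono) auto
    also have "\<dots> \<le> 2 * (cmod a * cmod (x i))\<^sup>2 + 2 * (cmod b * cmod (y i))\<^sup>2"
      using zero_le_power2[of "cmod a * cmod (x i) - cmod b * cmod (y i)"]
      by (simp add: power2_eq_square algebra_simps)
    finally show ?thesis by (simp add: power_mult_distrib)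
  qed
  then show ?thesis
    unfolding l2_def mem_Collect_eq by (blast intro: summable_comparison_test[OF _ summable])
qed

text \<open>Fatou's lemma for pointwise limits in l2.\<close>
lemma l2_pointwise_limit:
  assumes lim: "\<And>i. (\<lambda>M. x M i) \<longlonglongrightarrow> y i"
    and l2: "\<And>M. M \<ge> N \<Longrightarrow> x M \<in> l2"
    and bound: "\<And>M. M \<ge> N \<Longrightarrow> (l2norm (x M))\<^sup>2 \<le> C"
  shows "y \<in> l2" and "(l2norm y)\<^sup>2 \<le> C"
proof -
  have partial: "(\<Sum>i<I. (cmod (y i))\<^sup>2) \<le> C" for I
  proof (rule LIMSEQ_le_const2)
    show "(\<lambda>M. \<Sum>i<I. (cmod (x M i))\<^sup>2) \<longlonglongrightarrow> (\<Sum>i<I. (cmod (y i))\<^sup>2)"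
      by (intro tendsto_intros lim)
    have "(\<Sum>i<I. (cmod (x M i))\<^sup>2) \<le> C" if "M \<ge> N" for M
      using l2_sum_le_suminf[OF l2[OF that] finite_lessThan[of I]] l2norm_square[OF l2[OF that]]
        bound[OF that]
      by simp
    then show "\<exists>N. \<forall>M\<ge>N. (\<Sum>i<I. (cmod (x M i))\<^sup>2) \<le> C" by blast
  qed
  show y: "y \<in> l2" by (rule l2_of_bounded_partial_sums(1)[OF partial])
  show "(l2norm y)\<^sup>2 \<le> C"
    using l2_of_bounded_partial_sums(2)[OF partial] l2norm_square[OF y] by simp
qed

lemma cauchy_schwarz_l2:
  assumes x: "x \<in> l2" and y: "y \<in> l2"
  shows "summable (\<lambda>i. cnj (x i) * y i)" and "cmod (cinner x y) \<le> l2norm x * l2norm y"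
proof -
  have partial: "(\<Sum>i<I. cmod (cnj (x i) * y i)) \<le> l2norm x * l2norm y" for I
  proof -
    have "(\<Sum>i<I. cmod (cnj (x i) * y i)) = (\<Sum>i<I. \<bar>cmod (x i)\<bar> * \<bar>cmod (y i)\<bar>)"
      by (simp add: norm_mult)
    also have "\<dots> \<le> L2_set (\<lambda>i. cmod (x i)) {..<I} * L2_set (\<lambda>i. cmod (y i)) {..<I}"
      by (rule L2_set_mult_ineq)
    also have "\<dots> \<le> l2norm x * l2norm y"
      unfolding L2_set_def l2norm_def
      by (intro mult_mono real_sqrt_le_mono l2_sum_le_suminf x y real_sqrt_ge_zero
          l2_suminf_nonneg sum_nonneg) auto
    finally show ?thesis .
  qed
  have s: "summable (\<lambda>i. cmod (cnj (x i) * y i))"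
    by (rule bounded_imp_summable[where B="l2norm x * l2norm y"])
      (simp, metis partial lessThan_Suc_atMost)
  then show "summable (\<lambda>i. cnj (x i) * y i)" by (rule summable_norm_cancel)
  have "cmod (cinner x y) \<le> (\<Sum>i. cmod (cnj (x i) * y i))"
    unfolding cinner_def by (rule summable_norm[OF s])
  also have "\<dots> \<le> l2norm x * l2norm y" by (rule suminf_le_const[OF s partial])
  finally show "cmod (cinner x y) \<le> l2norm x * l2norm y" .
qed

lemma cinner_zero_right: "cinner x (\<lambda>i. 0) = 0"
  unfolding cinner_def by simp

lemma cinner_commute_cnj:
  assumes x: "x \<in> l2" and y: "y \<in> l2"
  shows "cinner y x = cnj (cinner x y)"
proof -
  have "cnj (cinner x y) = (\<Sum>i. cnj (cnj (x i) * y i))"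
    unfolding cinner_def
    by (rule bounded_linear.suminf[OF bounded_linear_cnj cauchy_schwarz_l2(1)[OF x y]])
  then show ?thesis unfolding cinner_def by (simp add: mult.commute)
qed

lemma cinner_lincomb_right:
  assumes x: "x \<in> l2" and y: "y \<in> l2" and z: "z \<in> l2"
  shows "cinner x (\<lambda>i. a * y i + b * z i) = a * cinner x y + b * cinner x z"
proof -
  have sy: "summable (\<lambda>i. cnj (x i) * y i)" and sz: "summable (\<lambda>i. cnj (x i) * z i)"
    using cauchy_schwarz_l2(1) x y z by auto
  have "cinner x (\<lambda>i. a * y i + b * z i) = (\<Sum>i. a * (cnj (x i) * y i) + b * (cnj (x i) * z i))"
    unfolding cinner_def by (simp add: algebra_simps)
  also have "\<dots> = (\<Sum>i. a * (cnj (x i) * y i)) + (\<Sum>i. b * (cnj (x i) * z i))"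
    by (rule suminf_add[symmetric, OF summable_mult[OF sy] summable_mult[OF sz]])
  also have "\<dots> = a * cinner x y + b * cinner x z"
    unfolding cinner_def by (simp add: suminf_mult sy sz)
  finally show ?thesis .
qed

lemma cinner_self_l2:
  assumes "x \<in> l2" shows "cinner x x = of_real ((l2norm x)\<^sup>2)"
proof -
  have s: "summable (\<lambda>n. (cmod (x n))\<^sup>2)" using assms unfolding l2_def by auto
  have "cinner x x = (\<Sum>n. complex_of_real ((cmod (x n))\<^sup>2))"
    unfolding cinner_def complex_norm_square by (simp add: mult.commute)
  also have "\<dots> = of_real (\<Sum>n. (cmod (x n))\<^sup>2)"
    by (rule suminf_of_real[OF s, symmetric])
  finally show ?thesis using l2norm_square[OF assms] by simp
qed

lemma l2_fcomb:
  "finite F \<Longrightarrow> (\<And>k. k \<in> F \<Longrightarrow> u k \<in> l2) \<Longrightarrow> (\<lambda>i. \<Sum>k\<in>F. c k * u k i) \<in> l2"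
proof (induction F rule: finite_induct)
  case empty
  then show ?case by (simp add: l2_zero)
next
  case (insert k F)
  then show ?case using l2_lincomb[of "u k" "\<lambda>i. \<Sum>k\<in>F. c k * u k i" "c k" 1] by simp
qed

lemma cinner_fcomb_right:
  assumes "x \<in> l2" "finite F" "\<And>k. k \<in> F \<Longrightarrow> u k \<in> l2"
  shows "cinner x (\<lambda>i. \<Sum>k\<in>F. c k * u k i) = (\<Sum>k\<in>F. c k * cinner x (u k))"
  using assms(2,3)
proof (induction F rule: finite_induct)
  case empty
  then show ?case by (simp add: cinner_zero_right)
next
  case (insert k F)
  have S: "(\<lambda>i. \<Sum>k\<in>F. c k * u k i) \<in> l2" by (rule l2_fcomb) (use insert in auto)
  show ?case using cinner_lincomb_right[OF assms(1) _ S, of "u k" "c k" 1] insert by simp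
qed

lemma cinner_fcomb_left:
  assumes "x \<in> l2" "finite F" "\<And>k. k \<in> F \<Longrightarrow> u k \<in> l2"
  shows "cinner (\<lambda>i. \<Sum>k\<in>F. c k * u k i) x = (\<Sum>k\<in>F. cnj (c k) * cinner (u k) x)"
proof -
  have "cinner (\<lambda>i. \<Sum>k\<in>F. c k * u k i) x = cnj (cinner x (\<lambda>i. \<Sum>k\<in>F. c k * u k i))"
    by (rule cinner_commute_cnj[OF assms(1) l2_fcomb[OF assms(2,3)]])
  also have "\<dots> = cnj (\<Sum>k\<in>F. c k * cinner x (u k))" by (simp only: cinner_fcomb_right[OF assms])
  also have "\<dots> = (\<Sum>k\<in>F. cnj (c k) * cinner (u k) x)"
    using assms(3) by (simp add: cinner_commute_cnj[OF assms(1)] cong: sum.cong)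
  finally show ?thesis .
qed

definition orthonormal :: "(nat \<Rightarrow> (nat \<Rightarrow> complex)) \<Rightarrow> bool" where
  "orthonormal f \<longleftrightarrow> (\<forall>n. f n \<in> l2) \<and> (\<forall>m n. cinner (f m) (f n) = (if m = n then 1 else 0))"

lemma onb_imp_orthonormal: "onb f \<Longrightarrow> orthonormal f"
  unfolding onb_def orthonormal_def by blast

lemma orthonormal_l2: "orthonormal f \<Longrightarrow> f n \<in> l2"
  unfolding orthonormal_def by blast

lemma fspan_subset_l2: "orthonormal f \<Longrightarrow> fspan f \<subseteq> l2"
  unfolding fspan_def by (auto intro: l2_fcomb orthonormal_l2)

lemma l2norm_orthonormal:
  assumes f: "orthonormal f" shows "l2norm (f n) = 1"
proof -
  have "of_real ((l2norm (f n))\<^sup>2) = (1 :: complex)"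
    using cinner_self_l2[OF orthonormal_l2[OF f]] f unfolding orthonormal_def by simp
  then show ?thesis using l2norm_nonneg[OF orthonormal_l2[OF f]]
    by (metis abs_of_nonneg of_real_eq_1_iff real_sqrt_abs real_sqrt_one)
qed

lemma cinner_orthonormal_fcomb:
  assumes f: "orthonormal f" and F: "finite F"
  shows "cinner (f m) (\<lambda>i. \<Sum>k\<in>F. c k * f k i) = (if m \<in> F then c m else 0)"
proof -
  have "cinner (f m) (\<lambda>i. \<Sum>k\<in>F. c k * f k i) = (\<Sum>k\<in>F. c k * cinner (f m) (f k))"
    by (rule cinner_fcomb_right[OF orthonormal_l2[OF f] F orthonormal_l2[OF f]])
  also have "\<dots> = (\<Sum>k\<in>F. if m = k then c k else 0)"
    by (rule sum.cong) (use f in \<open>auto simp: orthonormal_def\<close>)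
  finally show ?thesis using F by simp
qed

lemma l2norm_orthonormal_fcomb:
  assumes f: "orthonormal f" and F: "finite F"
  shows "(l2norm (\<lambda>i. \<Sum>k\<in>F. c k * f k i))\<^sup>2 = (\<Sum>k\<in>F. (cmod (c k))\<^sup>2)"
proof -
  let ?g = "\<lambda>i. \<Sum>k\<in>F. c k * f k i"
  have g: "?g \<in> l2" by (rule l2_fcomb[OF F orthonormal_l2[OF f]])
  have "of_real ((l2norm ?g)\<^sup>2) = cinner ?g ?g" by (rule cinner_self_l2[OF g, symmetric])
  also have "\<dots> = (\<Sum>k\<in>F. cnj (c k) * c k)"
    using cinner_fcomb_left[OF g F orthonormal_l2[OF f]] cinner_orthonormal_fcomb[OF f F]
    by (simp cong: sum.cong)
  also have "\<dots> = of_real (\<Sum>k\<in>F. (cmod (c k))\<^sup>2)"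
    by (simp only: of_real_sum complex_norm_square mult.commute)
  finally show ?thesis using of_real_eq_iff by blast
qed

section \<open>Riesz-Fischer\<close>

lemma summable_orthonormal_fcomb:
  assumes f: "orthonormal f" and c: "c \<in> l2"
  shows "summable (\<lambda>k. c k * f k i)"
  unfolding summable_Cauchy
proof (intro allI impI)
  fix \<epsilon> :: real assume \<epsilon>: "0 < \<epsilon>"
  then obtain N where N: "\<forall>m\<ge>N. \<forall>n. norm (\<Sum>k\<in>{m..<n}. (cmod (c k))\<^sup>2) < \<epsilon>\<^sup>2"
    using c unfolding l2_def mem_Collect_eq summable_Cauchy by (meson zero_less_power)
  have "norm (\<Sum>k\<in>{m..<n}. c k * f k i) < \<epsilon>" if "m \<ge> N" for m n
  proof -
    let ?x = "\<lambda>i. \<Sum>k\<in>{m..<n}. c k * f k i"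
    have x: "?x \<in> l2" by (rule l2_fcomb[OF _ orthonormal_l2[OF f]]) simp
    have "(l2norm ?x)\<^sup>2 = (\<Sum>k\<in>{m..<n}. (cmod (c k))\<^sup>2)"
      by (rule l2norm_orthonormal_fcomb[OF f]) simp
    also have "\<dots> < \<epsilon>\<^sup>2" using N that by (simp add: sum_nonneg)
    finally have "l2norm ?x < \<epsilon>"
      using l2norm_nonneg[OF x] \<epsilon> by (simp add: power_less_imp_less_base)
    then show ?thesis using cmod_le_l2norm[OF x, of i] by simp
  qed
  then show "\<exists>N. \<forall>m\<ge>N. \<forall>n. norm (\<Sum>k\<in>{m..<n}. c k * f k i) < \<epsilon>" by blast
qed

lemma riesz_fischer:
  assumes f: "orthonormal f" and c: "c \<in> l2"
  shows "\<exists>v\<in>l2. \<forall>m. cinner (f m) v = c m"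
proof -
  define S where "S N = (\<lambda>i. \<Sum>k<N. c k * f k i)" for N
  define v where "v i = (\<Sum>k. c k * f k i)" for i
  define T where "T N = (\<Sum>n. (cmod (c n))\<^sup>2) - (\<Sum>n<N. (cmod (c n))\<^sup>2)" for N
  have sc: "summable (\<lambda>n. (cmod (c n))\<^sup>2)" using c unfolding l2_def by simp
  have "(\<lambda>N. \<Sum>n<N. (cmod (c n))\<^sup>2) \<longlonglongrightarrow> (\<Sum>n. (cmod (c n))\<^sup>2)"
    by (rule summable_LIMSEQ[OF sc])
  then have "T \<longlonglongrightarrow> (\<Sum>n. (cmod (c n))\<^sup>2) - (\<Sum>n. (cmod (c n))\<^sup>2)"
    unfolding T_def by (intro tendsto_diff tendsto_const)
  then have T0: "T \<longlonglongrightarrow> 0" by simp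
  have S_diff: "(\<lambda>i. S M i - S N i) = (\<lambda>i. \<Sum>k\<in>{N..<M}. c k * f k i)" if "N \<le> M" for N M
    unfolding S_def using that
    by (simp add: sum_diff_nat_ivl[of 0 N M, symmetric] atLeast0LessThan)
  have tail: "(\<lambda>i. v i - S N i) \<in> l2 \<and> (l2norm (\<lambda>i. v i - S N i))\<^sup>2 \<le> T N" for N
  proof -
    have lim: "(\<lambda>M. S M i - S N i) \<longlonglongrightarrow> v i - S N i" for i
      unfolding S_def v_def by (intro tendsto_intros summable_LIMSEQ summable_orthonormal_fcomb f c)
    have l2: "(\<lambda>i. S M i - S N i) \<in> l2" if "M \<ge> N" for M
      unfolding S_diff[OF that] by (rule l2_fcomb[OF _ orthonormal_l2[OF f]]) simp
    have bound: "(l2norm (\<lambda>i. S M i - S N i))\<^sup>2 \<le> T N" if "M \<ge> N" for M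
    proof -
      have "(l2norm (\<lambda>i. S M i - S N i))\<^sup>2 = (\<Sum>k<M. (cmod (c k))\<^sup>2) - (\<Sum>k<N. (cmod (c k))\<^sup>2)"
        using l2norm_orthonormal_fcomb[OF f, of "{N..<M}" c] that
        by (simp add: S_diff sum_diff_nat_ivl[of 0 N M, symmetric] atLeast0LessThan)
      also have "\<dots> \<le> T N" unfolding T_def using sum_le_suminf[OF sc, of "{..<M}"] by simp
      finally show ?thesis .
    qed
    show ?thesis using l2_pointwise_limit[OF lim l2 bound] by blast
  qed
  have v: "v \<in> l2" using tail[of 0] unfolding S_def by simp
  have "cinner (f m) v = c m" for m
  proof -
    have "cmod (cinner (f m) v - c m) \<le> sqrt (T N)" if "N > m" for N
    proof -
      have w: "(\<lambda>i. v i - S N i) \<in> l2" using tail by blast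
      have SN: "S N \<in> l2" unfolding S_def by (rule l2_fcomb[OF _ orthonormal_l2[OF f]]) simp
      have "cinner (f m) v = cinner (f m) (S N) + cinner (f m) (\<lambda>i. v i - S N i)"
        using cinner_lincomb_right[OF orthonormal_l2[OF f, of m] SN w, where a=1 and b=1] by simp
      also have "cinner (f m) (S N) = c m"
        using cinner_orthonormal_fcomb[OF f, of "{..<N}"] that unfolding S_def by simp
      finally have "cmod (cinner (f m) v - c m) = cmod (cinner (f m) (\<lambda>i. v i - S N i))" by simp
      also have "\<dots> \<le> l2norm (\<lambda>i. v i - S N i)"
        using cauchy_schwarz_l2(2)[OF orthonormal_l2[OF f] w] l2norm_orthonormal[OF f] by simp
      also have "\<dots> \<le> sqrt (T N)"
        using tail[of N] l2norm_nonneg[OF w] real_sqrt_le_mono by fastforce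
      finally show ?thesis .
    qed
    moreover have "(\<lambda>N. sqrt (T N)) \<longlonglongrightarrow> 0"
      using tendsto_real_sqrt[OF T0] by simp
    ultimately have "cmod (cinner (f m) v - c m) \<le> 0"
      by (intro LIMSEQ_le_const[where X="\<lambda>N. sqrt (T N)"]) (auto intro: exI[of _ "Suc m"])
    then show ?thesis by simp
  qed
  with v show ?thesis by blast
qed

lemma riesz_representation_fspan:
  assumes f: "orthonormal f"
    and L_fcomb: "\<And>F d. finite F \<Longrightarrow>
      L (\<lambda>i. \<Sum>k\<in>F. d k * f k i) = (\<Sum>k\<in>F. cnj (d k) * L (f k))"
    and L_bounded: "\<And>g. g \<in> fspan f \<Longrightarrow> (cmod (L g))\<^sup>2 \<le> C * (l2norm g)\<^sup>2"
  shows "\<exists>v\<in>l2. \<forall>g\<in>fspan f. L g = cinner g v"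
proof -
  define c where "c n = L (f n)" for n
  have "(\<Sum>n<N. (cmod (c n))\<^sup>2) \<le> max C 0" for N
  proof -
    define s where "s = (\<Sum>n<N. (cmod (c n))\<^sup>2)"
    define g where "g = (\<lambda>i. \<Sum>n<N. c n * f n i)"
    have "L g = (\<Sum>n<N. cnj (c n) * c n)" unfolding g_def L_fcomb[OF finite_lessThan] c_def ..
    also have "\<dots> = of_real s"
      unfolding s_def by (simp only: of_real_sum complex_norm_square mult.commute)
    finally have "s\<^sup>2 \<le> C * (l2norm g)\<^sup>2"
      using L_bounded[of g] unfolding g_def fspan_def by auto
    also have "(l2norm g)\<^sup>2 = s" unfolding g_def s_def by (rule l2norm_orthonormal_fcomb[OF f]) simp
    finally have "s * s \<le> C * s" by (simp add: power2_eq_square)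
    moreover have "0 \<le> s" unfolding s_def by (simp add: sum_nonneg)
    ultimately show ?thesis unfolding s_def[symmetric]
      by (metis max.cobounded2 max.coboundedI1 mult_right_le_imp_le order_le_less)
  qed
  then obtain v where v: "v \<in> l2" and coeff: "\<And>m. cinner (f m) v = c m"
    using riesz_fischer[OF f l2_of_bounded_partial_sums(1)] by blast
  have "L g = cinner g v" if "g \<in> fspan f" for g
  proof -
    obtain G d where G: "finite G" and g: "g = (\<lambda>i. \<Sum>k\<in>G. d k * f k i)"
      using \<open>g \<in> fspan f\<close> unfolding fspan_def by blast
    show ?thesis
      unfolding g L_fcomb[OF G] cinner_fcomb_left[OF v G orthonormal_l2[OF f]] coeff c_def ..
  qed
  with v show ?thesis by blast
qed

section \<open>Generalized operators and the Kraus representation\<close>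

lemma gen_op_fcomb_left:
  assumes K: "gen_op e f K" and \<phi>: "\<phi> \<in> fspan e" and F: "finite F"
  shows "K (\<lambda>i. \<Sum>k\<in>F. d k * f k i) \<phi> = (\<Sum>k\<in>F. cnj (d k) * K (f k) \<phi>)"
proof -
  have fcomb: "(\<lambda>i. \<Sum>k\<in>G. d' k * f k i) \<in> fspan f" if "finite G" for G d'
    unfolding fspan_def using that by blast
  have antilinear: "g \<in> fspan f \<Longrightarrow> h \<in> fspan f \<Longrightarrow>
      K (\<lambda>i. a * g i + b * h i) \<phi> = cnj a * K g \<phi> + cnj b * K h \<phi>" for g h a b
    using K \<phi> unfolding gen_op_def by blast
  show ?thesis using F
  proof (induction F rule: finite_induct)
    case empty
    have "(\<lambda>i. 0) \<in> fspan f" using fcomb[of "{}"] by simp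
    then show ?case using antilinear[of "\<lambda>i. 0" "\<lambda>i. 0" 0 0] by simp
  next
    case (insert k F)
    have "f k \<in> fspan f" using fcomb[of "{k}" "\<lambda>_. 1"] by simp
    then show ?case
      using antilinear[OF _ fcomb[OF insert(1), of d], where g="f k" and a="d k" and b=1] insert
      by simp
  qed
qed

lemma rank1_finmat:
  assumes e: "onb e" and \<phi>: "\<phi> \<in> fspan e"
  shows "rank1 e \<phi> \<phi> \<in> finmat"
proof -
  obtain G a where G: "finite G" and \<phi>_eq: "\<phi> = (\<lambda>i. \<Sum>k\<in>G. a k * e k i)"
    using \<phi> unfolding fspan_def by blast
  have "cinner (e k) \<phi> = (if k \<in> G then a k else 0)" for k
    unfolding \<phi>_eq by (rule cinner_orthonormal_fcomb[OF onb_imp_orthonormal[OF e] G])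
  then have "{(k, l). rank1 e \<phi> \<phi> k l \<noteq> 0} \<subseteq> G \<times> G"
    unfolding rank1_def by auto
  with G show ?thesis unfolding finmat_def by (auto intro: finite_subset)
qed

lemma has_sum_cmod_square_le_Re:
  assumes "((\<lambda>\<beta>. a \<beta> * cnj (a \<beta>)) has_sum s) A" and "\<alpha> \<in> A"
  shows "(cmod (a \<alpha>))\<^sup>2 \<le> Re s"
proof (rule has_sum_mono_neutral)
  show "((\<lambda>\<beta>. (cmod (a \<beta>))\<^sup>2) has_sum (cmod (a \<alpha>))\<^sup>2) {\<alpha>}"
    using has_sum_finite[of "{\<alpha>}"] by simp
  show "((\<lambda>\<beta>. (cmod (a \<beta>))\<^sup>2) has_sum Re s) A"
    using has_sum_Re[OF assms(1)] by (simp add: complex_norm_square[symmetric] del: of_real_power)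
qed (use assms(2) in auto)

lemma bounded_op_quadratic_form_le:
  assumes "bounded_op B"
  obtains C where "\<And>x. x \<in> l2 \<Longrightarrow> cmod (cinner x (B x)) \<le> C * (l2norm x)\<^sup>2"
proof -
  obtain C where C: "\<And>x. x \<in> l2 \<Longrightarrow> l2norm (B x) \<le> C * l2norm x"
    and B: "\<And>x. x \<in> l2 \<Longrightarrow> B x \<in> l2"
    using assms unfolding bounded_op_def by blast
  have "cmod (cinner x (B x)) \<le> C * (l2norm x)\<^sup>2" if x: "x \<in> l2" for x
  proof -
    have "cmod (cinner x (B x)) \<le> l2norm x * l2norm (B x)"
      by (rule cauchy_schwarz_l2(2)[OF x B[OF x]])
    also have "\<dots> \<le> l2norm x * (C * l2norm x)"
      by (rule mult_left_mono[OF C[OF x] l2norm_nonneg[OF x]])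
    finally show ?thesis by (simp add: power2_eq_square algebra_simps)
  qed
  then show thesis by (rule that)
qed

theorem corollary6p4:
  fixes e f :: "nat \<Rightarrow> (nat \<Rightarrow> complex)"
    and A :: "nat set"
    and K :: "nat \<Rightarrow> (nat \<Rightarrow> complex) \<Rightarrow> (nat \<Rightarrow> complex) \<Rightarrow> complex"
    and Q :: "(nat \<Rightarrow> nat \<Rightarrow> complex) \<Rightarrow> (nat \<Rightarrow> complex) \<Rightarrow> (nat \<Rightarrow> complex) \<Rightarrow> complex"
  assumes onb_e: "onb e" and onb_f: "onb f"
    and K_gen: "\<forall>\<alpha>\<in>A. gen_op e f (K \<alpha>)"
    and Q_linear: "\<forall>r\<in>finmat. \<forall>s\<in>finmat. \<forall>a b. \<forall>g\<in>fspan f. \<forall>h\<in>fspan f.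
        Q (\<lambda>k l. a * r k l + b * s k l) g h = a * Q r g h + b * Q s g h"
    and Q_sesq: "\<forall>r\<in>finmat. \<forall>g\<in>fspan f. \<forall>g'\<in>fspan f. \<forall>h\<in>fspan f. \<forall>a b.
        Q r (\<lambda>i. a * g i + b * g' i) h = cnj a * Q r g h + cnj b * Q r g' h
      \<and> Q r h (\<lambda>i. a * g i + b * g' i) = a * Q r h g + b * Q r h g'"
    and Q_repr: "\<forall>\<phi>\<in>fspan e. \<forall>\<phi>'\<in>fspan e. \<forall>g\<in>fspan f. \<forall>h\<in>fspan f.
        ((\<lambda>\<alpha>. K \<alpha> g \<phi> * cnj (K \<alpha> h \<phi>')) has_sum Q (rank1 e \<phi> \<phi>') g h) A"
    and Q_cp: "\<forall>n::nat. \<forall>\<phi> \<psi>. (\<forall>k<n. \<phi> k \<in> fspan e \<and> \<psi> k \<in> fspan f) \<longrightarrow>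
        (let s = (\<Sum>k<n. \<Sum>l<n. Q (rank1 e (\<phi> k) (\<phi> l)) (\<psi> k) (\<psi> l))
         in Im s = 0 \<and> 0 \<le> Re s)"
    and Q_bounded: "\<forall>r\<in>finmat. \<exists>B. bounded_op B \<and>
        (\<forall>g\<in>fspan f. \<forall>h\<in>fspan f. Q r g h = cinner g (B h))"
  shows "\<forall>\<alpha>\<in>A. \<forall>\<phi>\<in>fspan e. \<exists>v\<in>l2. \<forall>g\<in>fspan f. K \<alpha> g \<phi> = cinner g v"
proof (intro ballI)
  fix \<alpha> \<phi> assume \<alpha>: "\<alpha> \<in> A" and \<phi>: "\<phi> \<in> fspan e"
  have f: "orthonormal f" by (rule onb_imp_orthonormal[OF onb_f])
  obtain B where B: "bounded_op B"
    and QB: "\<forall>g\<in>fspan f. \<forall>h\<in>fspan f. Q (rank1 e \<phi> \<phi>) g h = cinner g (B h)"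
    using Q_bounded rank1_finmat[OF onb_e \<phi>] by blast
  obtain C where C: "\<And>x. x \<in> l2 \<Longrightarrow> cmod (cinner x (B x)) \<le> C * (l2norm x)\<^sup>2"
    using bounded_op_quadratic_form_le[OF B] by blast
  show "\<exists>v\<in>l2. \<forall>g\<in>fspan f. K \<alpha> g \<phi> = cinner g v"
  proof (rule riesz_representation_fspan[OF f])
    show "K \<alpha> (\<lambda>i. \<Sum>k\<in>F. d k * f k i) \<phi> = (\<Sum>k\<in>F. cnj (d k) * K \<alpha> (f k) \<phi>)"
      if "finite F" for F d
      using gen_op_fcomb_left K_gen \<alpha> \<phi> that by blast
    show "(cmod (K \<alpha> g \<phi>))\<^sup>2 \<le> C * (l2norm g)\<^sup>2" if g: "g \<in> fspan f" for g
    proof -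
      have "(cmod (K \<alpha> g \<phi>))\<^sup>2 \<le> Re (Q (rank1 e \<phi> \<phi>) g g)"
        using has_sum_cmod_square_le_Re[where a="\<lambda>\<beta>. K \<beta> g \<phi>", OF _ \<alpha>] Q_repr \<phi> g by blast
      also have "\<dots> \<le> cmod (cinner g (B g))" using QB g complex_Re_le_cmod by auto
      also have "\<dots> \<le> C * (l2norm g)\<^sup>2" using C fspan_subset_l2[OF f] g by blast
      finally show ?thesis .
    qed
  qed
qed

end
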